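(* Let $k\ge2$ be an integer and, for a positive integer $A$, let $f^\infty_A$ be the infinite word $(\mathsf{1}^A\mathsf{2}^A\cdots\mathsf{k}^A)(\mathsf{1}^A\mathsf{2}^A\cdots\mathsf{k}^A)\cdots$ over $[k]$. Let $A,B$ be positive integers with $kA\le B$, and let $s=(w_1',w_2')$ be a (finite) common subsequence between $f^\infty_A$ and $f^\infty_B$. Then \[\operatorname{span} s\ \ge\ \left(k+1-\frac{kA}{B}\right)\operatorname{len} s-2(A+B).\]
   Context: $\alpha^A$ denotes the letter $\alpha$ repeated $A$ times. Symbols in words are treated as distinguishable positions. A common subsequence of words $w_1,w_2$ is a pair $s=(w_1',w_2')$ of subsequences of $w_1$ and $w_2$ respectively that are equal as words; $\operatorname{len} s$ is their common length. The span $\operatorname{span}_w w'$ of a subsequence $w'$ of $w$ is the length of the shortest block of consecutive symbols of $w$ containing $w'$, and $\operatorname{span} s=\operatorname{span}_{w_1}w_1'+\operatorname{span}_{w_2}w_2'$. *)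

theory Defs
  imports Complex_Main
begin

definition fword :: "nat \<Rightarrow> nat \<Rightarrow> nat \<Rightarrow> nat" where
  "fword k A i = (i div A) mod k + 1"

text \<open>A subsequence of a word w is given by its strictly increasing list of positions.
  Its span is the length of the shortest block of consecutive symbols containing it
  (0 for the empty subsequence).\<close>
definition span_pos :: "nat list \<Rightarrow> nat" where
  "span_pos ps = (if ps = [] then 0 else last ps - hd ps + 1)"

definition common_subseq :: "(nat \<Rightarrow> 'a) \<Rightarrow> (nat \<Rightarrow> 'a) \<Rightarrow> nat list \<Rightarrow> nat list \<Rightarrow> bool" where
  "common_subseq w1 w2 ps qs \<longleftrightarrow>
     sorted_wrt (<) ps \<and> sorted_wrt (<) qs \<and> length ps = length qs \<and>
     (\<forall>j < length ps. w1 (ps ! j) = w2 (qs ! j))"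

end

theory Submission
  imports Defs
begin

text \<open>Stretch every block of \<open>f\<^sub>A\<close> by the factor \<open>k\<close>: the potential
  \<open>\<phi>(p) = A\<lfloor>p/A\<rfloor> + k (p mod A)\<close> exceeds \<open>p\<close> by at most \<open>(k-1)(A-1)\<close>, and two positions
  of \<open>f\<^sub>A\<close> carrying the same letter have potentials at least \<open>k\<close> apart, because blocks with the
  same letter are \<open>k\<close> blocks apart. Along a common subsequence, consecutive matched positions of
  \<open>f\<^sub>B\<close> inside one \<open>B\<close>-block carry the same letter, so \<open>\<phi>\<close> grows by at least \<open>k\<close>; whenever the
  positions in \<open>f\<^sub>B\<close> enter a new \<open>B\<close>-block, \<open>\<phi>\<close> may drop, but by less than \<open>kA\<close>. Hence the span in
  \<open>f\<^sub>A\<close> is about \<open>k \<cdot> len - kA \<cdot> D\<close>, where \<open>D\<close> counts the \<open>B\<close>-blocks crossed in \<open>f\<^sub>B\<close>, while the span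
  in \<open>f\<^sub>B\<close> is at least \<open>len\<close> and at least about \<open>B \<cdot> D\<close>. Weighting the latter two bounds by
  \<open>1 - kA/B\<close> and \<open>kA/B\<close> gives the theorem.\<close>

lemma successively_telescope:
  fixes F :: "'a \<Rightarrow> 'b::linordered_idom"
  assumes "successively (\<lambda>x y. F x + c \<le> F y) xs" and "xs \<noteq> []"
  shows "F (hd xs) + of_nat (length xs - 1) * c \<le> F (last xs)"
  using assms
proof (induction xs rule: induct_list012)
  case (3 x y xs)
  then have "F y + of_nat (length xs) * c \<le> F (last (y # xs))" by simp
  with "3.prems" show ?case by (simp add: algebra_simps)
qed auto

lemma common_subseq_successively:
  assumes "common_subseq w1 w2 ps qs"
  shows "successively (\<lambda>(p, q) (p', q'). p < p' \<and> q < q' \<and> w1 p = w2 q \<and> w1 p' = w2 q')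
           (zip ps qs)"
  using assms unfolding common_subseq_def successively_conv_nth
  by (auto simp: sorted_wrt_nth_less)

lemma strict_sorted_set_subset_atLeastAtMost:
  fixes ps :: "nat list"
  assumes "sorted_wrt (<) ps"
  shows "set ps \<subseteq> {hd ps..last ps}"
proof
  fix x assume "x \<in> set ps"
  then have "hd ps \<le> x"
    using assms by (cases ps) auto
  moreover have "x \<le> last ps"
    using \<open>x \<in> set ps\<close> assms by (cases ps rule: rev_cases) (auto simp: sorted_wrt_append)
  ultimately show "x \<in> {hd ps..last ps}" by simp
qed

lemma span_pos_eq:
  assumes "sorted_wrt (<) ps" and "ps \<noteq> []"
  shows "int (span_pos ps) = int (last ps) - int (hd ps) + 1"
proof -
  have "hd ps \<le> last ps"
    using strict_sorted_set_subset_atLeastAtMost[OF assms(1)] last_in_set[OF assms(2)] by auto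
  then show ?thesis
    using assms(2) by (simp add: span_pos_def)
qed

lemma length_le_span_pos:
  assumes "sorted_wrt (<) ps"
  shows "length ps \<le> span_pos ps"
proof (cases "ps = []")
  case False
  have "card (set ps) \<le> Suc (last ps) - hd ps"
    using card_mono[OF _ strict_sorted_set_subset_atLeastAtMost[OF assms]] by simp
  with assms False show ?thesis
    by (simp add: span_pos_def strict_sorted_iff distinct_card)
qed (simp add: span_pos_def)

lemma mult_div_diff_less:
  fixes q q' B :: nat
  assumes "B > 0"
  shows "int B * (int (q' div B) - int (q div B)) < int q' - int q + int B"
proof -
  have "B * (q' div B) \<le> q'" by simp
  moreover have "q < B * (q div B) + B"
    using mult_div_mod_eq[of B q] mod_less_divisor[OF assms, of q] by linarith
  ultimately have "int B * int (q' div B) \<le> int q'" and "int q < int B * int (q div B) + int B"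
    by (metis of_nat_le_iff of_nat_mult, metis of_nat_add of_nat_less_iff of_nat_mult)
  then show ?thesis by (simp add: algebra_simps)
qed

definition potential :: "nat \<Rightarrow> nat \<Rightarrow> nat \<Rightarrow> int" where
  "potential k A p = int A * int (p div A) + int k * int (p mod A)"

lemma potential_bounds:
  assumes "k > 0" and "A > 0"
  shows "int p \<le> potential k A p" and "potential k A p \<le> int p + (int k - 1) * (int A - 1)"
proof -
  have p: "int p = int A * int (p div A) + int (p mod A)"
    by (metis of_nat_add of_nat_mult mult_div_mod_eq)
  have "int (p mod A) \<le> int A - 1"
    using assms by simp
  then have "(int k - 1) * int (p mod A) \<le> (int k - 1) * (int A - 1)"
    using assms by (intro mult_left_mono) auto
  moreover have "0 \<le> (int k - 1) * int (p mod A)"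
    using assms by simp
  ultimately show "int p \<le> potential k A p" and "potential k A p \<le> int p + (int k - 1) * (int A - 1)"
    unfolding potential_def p by (simp_all add: algebra_simps)
qed

lemma potential_increase_same_letter:
  assumes "k > 0" and "A > 0" and "p < p'" and "fword k A p = fword k A p'"
  shows "potential k A p + int k \<le> potential k A p'"
proof (cases "p div A = p' div A")
  case True
  with \<open>p < p'\<close> have "p mod A < p' mod A"
    by (metis mult_div_mod_eq nat_add_left_cancel_less)
  then have "int k * int (p mod A) + int k \<le> int k * int (p' mod A)"
    using mult_left_mono[of "int (p mod A) + 1" "int (p' mod A)" "int k"] by (simp add: algebra_simps)
  with True show ?thesis
    unfolding potential_def by simp
next
  case False
  with \<open>p < p'\<close> have "p div A < p' div A"
    using div_le_mono[of p p' A] by simp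
  moreover have "k dvd p' div A - p div A"
    using assms(4) mod_eq_dvd_iff_nat[of "p div A" "p' div A" k] \<open>p div A < p' div A\<close>
    by (simp add: fword_def)
  ultimately have "p div A + k \<le> p' div A"
    using dvd_imp_le[of k "p' div A - p div A"] by linarith
  then have "int A * int (p div A) + int A * int k \<le> int A * int (p' div A)"
    using mult_left_mono[of "int (p div A) + int k" "int (p' div A)" "int A"] by (simp add: algebra_simps)
  moreover have "int k * int (p mod A) + int k \<le> int A * int k"
    using mult_left_mono[of "int (p mod A) + 1" "int A" "int k"] mod_less_divisor[OF assms(2), of p]
    by (simp add: algebra_simps)
  moreover have "0 \<le> int k * int (p' mod A)"
    by simp
  ultimately show ?thesis
    unfolding potential_def by linarith
qed

definition matching_potential :: "nat \<Rightarrow> nat \<Rightarrow> nat \<Rightarrow> nat \<times> nat \<Rightarrow> int" where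
  "matching_potential k A B = (\<lambda>(p, q). potential k A p + int k * int A * int (q div B))"

lemma matching_potential_increase:
  assumes "k > 0" and "A > 0" and "p < p'" and "q < q'"
    and "fword k A p = fword k B q" and "fword k A p' = fword k B q'"
  shows "matching_potential k A B (p, q) + int k \<le> matching_potential k A B (p', q')"
proof (cases "q div B = q' div B")
  case True
  then have "fword k A p = fword k A p'"
    using assms(5,6) by (simp add: fword_def)
  from potential_increase_same_letter[OF assms(1-3) this] True show ?thesis
    by (simp add: matching_potential_def)
next
  case False
  with \<open>q < q'\<close> have "q div B < q' div B"
    using div_le_mono[of q q' B] by simp
  then have "int k * int A * int (q div B) + int k * int A \<le> int k * int A * int (q' div B)"
    using mult_left_mono[of "int (q div B) + 1" "int (q' div B)" "int k * int A"]
    by (simp add: algebra_simps)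
  moreover have "potential k A p \<le> int p + (int k - 1) * (int A - 1)"
    and "int p' \<le> potential k A p'"
    using potential_bounds assms(1,2) by blast+
  ultimately show ?thesis
    using \<open>p < p'\<close> by (simp add: matching_potential_def algebra_simps)
qed

lemma common_subseq_matching_potential:
  assumes "k > 0" and "A > 0" and "common_subseq (fword k A) (fword k B) ps qs" and "ps \<noteq> []"
  shows "matching_potential k A B (hd ps, hd qs) + (int (length ps) - 1) * int k
           \<le> matching_potential k A B (last ps, last qs)"
proof -
  have len: "length qs = length ps"
    using assms(3) by (simp add: common_subseq_def)
  then have "qs \<noteq> []" and "length ps \<ge> 1"
    using assms(4) by (auto simp: Suc_le_eq)
  have "successively (\<lambda>x y. matching_potential k A B x + int k \<le> matching_potential k A B y)
          (zip ps qs)"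
    using common_subseq_successively[OF assms(3)]
    by (rule successively_mono) (auto intro: matching_potential_increase[OF assms(1,2)])
  from successively_telescope[OF this] show ?thesis
    using assms(4) len \<open>qs \<noteq> []\<close> \<open>length ps \<ge> 1\<close> by (simp add: hd_zip last_zip of_nat_diff)
qed

lemma common_subseq_span_pos_fst:
  assumes "k > 0" and "A > 0" and "common_subseq (fword k A) (fword k B) ps qs" and "ps \<noteq> []"
  shows "int k * int (length ps) + int A
           \<le> int (span_pos ps) + int k * int A * (int (last qs div B) - int (hd qs div B) + 1)"
proof -
  have "sorted_wrt (<) ps"
    using assms(3) by (simp add: common_subseq_def)
  have "potential k A (last ps) \<le> int (last ps) + (int k - 1) * (int A - 1)"
    and "int (hd ps) \<le> potential k A (hd ps)"
    using potential_bounds assms(1,2) by blast+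
  with common_subseq_matching_potential[OF assms] span_pos_eq[OF \<open>sorted_wrt (<) ps\<close> assms(4)]
    assms(4) show ?thesis
    by (simp add: matching_potential_def algebra_simps)
qed

lemma combine_span_bounds:
  fixes x s n k A B :: nat and D :: int
  assumes span1: "int k * int n + int A \<le> int x + int k * int A * (D + 1)"
    and span2: "n \<le> s" "int B * D \<le> int s - 2 + int B"
    and "0 < B" and "k * A \<le> B"
  shows "(real k + 1 - real k * real A / real B) * real n - 2 * (real A + real B) \<le> real (x + s)"
proof -
  define t where "t = real k * real A / real B"
  have t: "0 \<le> t" "t \<le> 1" "t * real B = real k * real A"
    using assms(4,5) by (auto simp: t_def field_simps of_nat_mult[symmetric] simp del: of_nat_mult)
  have "real B * D \<le> real s - 2 + real B"
    using span2(2) by (simp only: of_int_le_iff[symmetric, where 'a=real]) simp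
  have "real k * real A * D = t * (real B * D)"
    using t(3) by (metis mult.assoc)
  also have "\<dots> \<le> t * (real s - 2 + real B)"
    using \<open>real B * D \<le> real s - 2 + real B\<close> t(1) by (rule mult_left_mono)
  also have "\<dots> = t * real s - 2 * t + real k * real A"
    using t(3) by (simp add: algebra_simps)
  finally have D_bound: "real k * real A * D \<le> t * real s - 2 * t + real k * real A" .
  have "real k * real n + real A \<le> real x + real k * real A * D + real k * real A"
    using span1 by (simp only: of_int_le_iff[symmetric, where 'a=real]) (simp add: algebra_simps)
  moreover have "real n - t * real n \<le> real s - t * real s"
    using mult_left_mono[of "real n" "real s" "1 - t"] span2(1) t(2) by (simp add: algebra_simps)
  moreover have "real k * real A \<le> real B"
    using assms(5) by (metis of_nat_le_iff of_nat_mult)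
  ultimately show ?thesis
    using D_bound t(1) unfolding t_def[symmetric] by (simp add: algebra_simps)
qed

theorem lemma3p3:
  fixes k A B :: nat and ps qs :: "nat list"
  assumes "k \<ge> 2" and "A > 0" and "B > 0" and "k * A \<le> B"
    and "common_subseq (fword k A) (fword k B) ps qs"
  shows "real (span_pos ps + span_pos qs) \<ge>
           (real k + 1 - real k * real A / real B) * real (length ps) - 2 * (real A + real B)"
proof (cases "ps = []")
  case True
  then show ?thesis by simp
next
  case False
  have qs: "sorted_wrt (<) qs" "qs \<noteq> []" "length qs = length ps"
    using assms(5) False by (auto simp: common_subseq_def)
  define D where "D = int (last qs div B) - int (hd qs div B)"
  have "int k * int (length ps) + int A \<le> int (span_pos ps) + int k * int A * (D + 1)"
    using common_subseq_span_pos_fst[OF _ assms(2,5) False] assms(1) unfolding D_def by simp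
  moreover have "length ps \<le> span_pos qs"
    using length_le_span_pos[OF qs(1)] qs(3) by simp
  moreover have "int B * D \<le> int (span_pos qs) - 2 + int B"
    using mult_div_diff_less[OF assms(3), of "last qs" "hd qs"] span_pos_eq[OF qs(1,2)]
    unfolding D_def by linarith
  ultimately show ?thesis
    using assms(3,4) by (rule combine_span_bounds)
qed

end
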